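(* In the setting described in the context, consider the two problems $$(\mathrm{ACC})\ \max_{\boldsymbol\alpha}\min\Big\{\min_{(i,\theta_b)\in\Xi}W_i(\theta_b)G_i(\theta_b),\ \min_{i\ne i^*,\,\theta_b\in\Theta_{i^*}}G_i(\theta_b),\ \min_{\theta_b\notin\Theta_{i^*}}G_{i^*}(\theta_b)\Big\},$$ $$(\mathrm{FN})\ \max_{\boldsymbol\alpha}\min\Big\{\min_{(i,\theta_b)\in\Xi}W_i(\theta_b)G_i(\theta_b),\ \min_{\theta_b\notin\Theta_{i^*}}G_{i^*}(\theta_b)\Big\},$$ each subject to $\sum_{i,b}\alpha_i(\theta_b)=1$, $\alpha_i(\theta_b)\ge0$. An allocation $\boldsymbol\alpha$ is optimal for (ACC) (respectively (FN)) if and only if: (i) for all $1\le b\le B$, $\alpha_{i^b}^2(\theta_b)/\lambda_{i^b}^2(\theta_b)=\sum_{i\ne i^b}\alpha_i^2(\theta_b)/\lambda_i^2(\theta_b)$; and (ii) for all $(i,\theta_b),(j,\theta_{b'})\in\Xi\cup\Xi^{\mathrm{adv}}$, $W^{\mathrm{ACC}}_i(\theta_b)G_i(\theta_b)=W^{\mathrm{ACC}}_j(\theta_{b'})G_j(\theta_{b'})$ (respectively $W^{\mathrm{FN}}_i(\theta_b)G_i(\theta_b)=W^{\mathrm{FN}}_j(\theta_{b'})G_j(\theta_{b'})$).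
   Context: There are $k\ge2$ solutions and parameter values $\theta_1,\dots,\theta_B$ with probabilities $p_b>0$, $\sum_bp_b=1$. For each $i,b$: $y_i(\theta_b)\in\mathbb R$ and $\lambda_i(\theta_b)>0$. Each $i^b=\arg\min_iy_i(\theta_b)$ unique; $i^*=\arg\max_i\sum_bp_b\mathbf 1\{i=i^b\}$ unique; $\Theta_i=\{\theta_b:i^b=i\}$. For an allocation $\boldsymbol\alpha$ and $i\ne i^b$, $G_i(\theta_b)=\frac{(y_i(\theta_b)-y_{i^b}(\theta_b))^2}{2(\lambda_i^2(\theta_b)/\alpha_i(\theta_b)+\lambda^2_{i^b}(\theta_b)/\alpha_{i^b}(\theta_b))}$, set to $0$ if $\alpha_i(\theta_b)=0$ or $\alpha_{i^b}(\theta_b)=0$. Let $d_j=\sum_bp_b\mathbf 1\{i^*=i^b\}-\sum_bp_b\mathbf 1\{j=i^b\}$, $\Xi=\{(i,\theta_b):i\ne i^*,i\ne i^b\}$, $\Xi^{\mathrm{adv}}=\{(i^*,\theta_b):\theta_b\notin\Theta_{i^*}\}$. For $(i,\theta_b)\in\Xi$: $W_i(\theta_b)=\max\{\min(\min_{j\ne i^*}d_j,d_i/2)/p_b,1\}$ if $\theta_b\in\Theta_{i^*}$, and $W_i(\theta_b)=\max\{d_i/p_b,1\}$ if $\theta_b\notin\Theta_{i^*}$. Modified weights on $\Xi\cup\Xi^{\mathrm{adv}}$: $W^{\mathrm{ACC}}_i(\theta_b)=1$ if $\theta_b\in\Theta_{i^*}$ or $(i,\theta_b)\in\Xi^{\mathrm{adv}}$,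 and $W^{\mathrm{ACC}}_i(\theta_b)=W_i(\theta_b)$ if $(i,\theta_b)\in\Xi$ with $\theta_b\notin\Theta_{i^*}$; $W^{\mathrm{FN}}_i(\theta_b)=W_i(\theta_b)$ if $(i,\theta_b)\in\Xi$ and $=1$ if $(i,\theta_b)\in\Xi^{\mathrm{adv}}$; both are $\infty$ outside $\Xi\cup\Xi^{\mathrm{adv}}$. *)

theory Defs
  imports Main "HOL-Library.FuncSet" Complex_Main
begin

text \<open>Solutions are indexed by i < k, parameter values theta_b by b < B.
  p b is the probability of theta_b, y i b = y_i(theta_b), lam i b = lambda_i(theta_b),
  and an allocation is a function al with al i b = alpha_i(theta_b).\<close>

definition ibest :: "nat \<Rightarrow> (nat \<Rightarrow> nat \<Rightarrow> real) \<Rightarrow> nat \<Rightarrow> nat" where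
  "ibest k y b = (THE i. i < k \<and> (\<forall>j<k. j \<noteq> i \<longrightarrow> y i b < y j b))"

definition freq :: "nat \<Rightarrow> nat \<Rightarrow> (nat \<Rightarrow> real) \<Rightarrow> (nat \<Rightarrow> nat \<Rightarrow> real) \<Rightarrow> nat \<Rightarrow> real" where
  "freq k B p y i = (\<Sum>b<B. p b * (if i = ibest k y b then 1 else 0))"

definition istar :: "nat \<Rightarrow> nat \<Rightarrow> (nat \<Rightarrow> real) \<Rightarrow> (nat \<Rightarrow> nat \<Rightarrow> real) \<Rightarrow> nat" where
  "istar k B p y = (THE i. i < k \<and> (\<forall>j<k. j \<noteq> i \<longrightarrow> freq k B p y j < freq k B p y i))"

definition Theta :: "nat \<Rightarrow> nat \<Rightarrow> (nat \<Rightarrow> nat \<Rightarrow> real) \<Rightarrow> nat \<Rightarrow> nat set" where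
  "Theta k B y i = {b. b < B \<and> ibest k y b = i}"

definition Gfun :: "nat \<Rightarrow> (nat \<Rightarrow> nat \<Rightarrow> real) \<Rightarrow> (nat \<Rightarrow> nat \<Rightarrow> real)
                    \<Rightarrow> (nat \<Rightarrow> nat \<Rightarrow> real) \<Rightarrow> nat \<Rightarrow> nat \<Rightarrow> real" where
  "Gfun k y lam al i b =
     (let ib = ibest k y b in
      if al i b = 0 \<or> al ib b = 0 then 0
      else (y i b - y ib b)^2 / (2 * ((lam i b)^2 / al i b + (lam ib b)^2 / al ib b)))"

definition dgap :: "nat \<Rightarrow> nat \<Rightarrow> (nat \<Rightarrow> real) \<Rightarrow> (nat \<Rightarrow> nat \<Rightarrow> real) \<Rightarrow> nat \<Rightarrow> real" where
  "dgap k B p y j = freq k B p y (istar k B p y) - freq k B p y j"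

definition Xi :: "nat \<Rightarrow> nat \<Rightarrow> (nat \<Rightarrow> real) \<Rightarrow> (nat \<Rightarrow> nat \<Rightarrow> real) \<Rightarrow> (nat \<times> nat) set" where
  "Xi k B p y = {(i, b). i < k \<and> b < B \<and> i \<noteq> istar k B p y \<and> i \<noteq> ibest k y b}"

definition Xiadv :: "nat \<Rightarrow> nat \<Rightarrow> (nat \<Rightarrow> real) \<Rightarrow> (nat \<Rightarrow> nat \<Rightarrow> real) \<Rightarrow> (nat \<times> nat) set" where
  "Xiadv k B p y = {(i, b). i = istar k B p y \<and> b < B \<and> b \<notin> Theta k B y (istar k B p y)}"

definition Wfun :: "nat \<Rightarrow> nat \<Rightarrow> (nat \<Rightarrow> real) \<Rightarrow> (nat \<Rightarrow> nat \<Rightarrow> real) \<Rightarrow> nat \<Rightarrow> nat \<Rightarrow> real" where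
  "Wfun k B p y i b =
     (if b \<in> Theta k B y (istar k B p y)
      then max (min (Min {dgap k B p y j | j. j < k \<and> j \<noteq> istar k B p y})
                    (dgap k B p y i / 2) / p b) 1
      else max (dgap k B p y i / p b) 1)"

text \<open>Modified weights; only their values on Xi \<union> Xiadv are ever used
  (outside that set the paper sets them to infinity).\<close>
definition WACC :: "nat \<Rightarrow> nat \<Rightarrow> (nat \<Rightarrow> real) \<Rightarrow> (nat \<Rightarrow> nat \<Rightarrow> real) \<Rightarrow> nat \<Rightarrow> nat \<Rightarrow> real" where
  "WACC k B p y i b =
     (if b \<in> Theta k B y (istar k B p y) \<or> (i, b) \<in> Xiadv k B p y then 1 else Wfun k B p y i b)"

definition WFN :: "nat \<Rightarrow> nat \<Rightarrow> (nat \<Rightarrow> real) \<Rightarrow> (nat \<Rightarrow> nat \<Rightarrow> real) \<Rightarrow> nat \<Rightarrow> nat \<Rightarrow> real" where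
  "WFN k B p y i b = (if (i, b) \<in> Xi k B p y then Wfun k B p y i b else 1)"

definition feasible :: "nat \<Rightarrow> nat \<Rightarrow> (nat \<Rightarrow> nat \<Rightarrow> real) \<Rightarrow> bool" where
  "feasible k B al \<longleftrightarrow> (\<forall>i<k. \<forall>b<B. al i b \<ge> 0) \<and> (\<Sum>i<k. \<Sum>b<B. al i b) = 1"

text \<open>The minimum of the (up to three) inner minima is written as the
  minimum over the union of the value sets; an empty inner group thus drops out
  (the usual convention min of the empty set = +infinity).\<close>
definition objACC :: "nat \<Rightarrow> nat \<Rightarrow> (nat \<Rightarrow> real) \<Rightarrow> (nat \<Rightarrow> nat \<Rightarrow> real) \<Rightarrow> (nat \<Rightarrow> nat \<Rightarrow> real)
                      \<Rightarrow> (nat \<Rightarrow> nat \<Rightarrow> real) \<Rightarrow> real" where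
  "objACC k B p y lam al =
     Min ({Wfun k B p y i b * Gfun k y lam al i b | i b. (i, b) \<in> Xi k B p y}
        \<union> {Gfun k y lam al i b | i b. i < k \<and> i \<noteq> istar k B p y \<and> b \<in> Theta k B y (istar k B p y)}
        \<union> {Gfun k y lam al (istar k B p y) b | b. b < B \<and> b \<notin> Theta k B y (istar k B p y)})"

definition objFN :: "nat \<Rightarrow> nat \<Rightarrow> (nat \<Rightarrow> real) \<Rightarrow> (nat \<Rightarrow> nat \<Rightarrow> real) \<Rightarrow> (nat \<Rightarrow> nat \<Rightarrow> real)
                      \<Rightarrow> (nat \<Rightarrow> nat \<Rightarrow> real) \<Rightarrow> real" where
  "objFN k B p y lam al =
     Min ({Wfun k B p y i b * Gfun k y lam al i b | i b. (i, b) \<in> Xi k B p y}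
        \<union> {Gfun k y lam al (istar k B p y) b | b. b < B \<and> b \<notin> Theta k B y (istar k B p y)})"

definition optimal :: "nat \<Rightarrow> nat \<Rightarrow> ((nat \<Rightarrow> nat \<Rightarrow> real) \<Rightarrow> real) \<Rightarrow> (nat \<Rightarrow> nat \<Rightarrow> real) \<Rightarrow> bool" where
  "optimal k B obj al \<longleftrightarrow> feasible k B al \<and> (\<forall>al'. feasible k B al' \<longrightarrow> obj al' \<le> obj al)"

definition balance_cond :: "nat \<Rightarrow> nat \<Rightarrow> (nat \<Rightarrow> nat \<Rightarrow> real) \<Rightarrow> (nat \<Rightarrow> nat \<Rightarrow> real)
                            \<Rightarrow> (nat \<Rightarrow> nat \<Rightarrow> real) \<Rightarrow> bool" where
  "balance_cond k B y lam al \<longleftrightarrow>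
     (\<forall>b<B. (al (ibest k y b) b)^2 / (lam (ibest k y b) b)^2
            = (\<Sum>i\<in>{i. i < k \<and> i \<noteq> ibest k y b}. (al i b)^2 / (lam i b)^2))"

definition equal_cond :: "(nat \<times> nat) set \<Rightarrow> (nat \<Rightarrow> nat \<Rightarrow> real) \<Rightarrow> (nat \<Rightarrow> nat \<Rightarrow> real) \<Rightarrow> bool" where
  "equal_cond S Wt Gv \<longleftrightarrow>
     (\<forall>(i, b)\<in>S. \<forall>(j, b')\<in>S. Wt i b * Gv i b = Wt j b' * Gv j b')"

end

theory Submission
  imports Defs
begin

(* For positive weights w, consider maximising min w_i(theta_b) G_i(theta_b) over the pairs
   (i, theta_b) with i <> i^b.  A feasible allocation that is balanced (condition (i)) and
   equalises all weighted rates (condition (ii)) exists: within one theta_b, prescribing the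
   costs lambda_i^2/alpha_i + lambda_{i^b}^2/alpha_{i^b} turns the balance equation into a single
   scalar equation, solved by the intermediate value theorem.  Such an allocation alpha is
   positive, and no feasible beta <> alpha has G(beta) >= G(alpha) on every pair: the costs are
   convex in alpha, and the balance equation bounds the weighted sum of their Bregman divergences
   by the total change of budget, which is zero.  Hence alpha is the unique maximiser.
   Both (ACC) and (FN) are such max-min problems, with weights W^ACC and W^FN on
   Xi \<union> Xi^adv: the extra terms W G in (ACC) are dominated by G because W >= 1. *)

section \<open>Solving the balance equation\<close>

lemma exists_pos_le_square_le:
  fixes e a :: real
  assumes "0 < e" "0 < a"
  obtains u where "0 < u" "u \<le> e" "u\<^sup>2 \<le> a"
proof
  show "0 < min e (sqrt a)" "min e (sqrt a) \<le> e" using assms by auto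
  have "(min e (sqrt a))\<^sup>2 \<le> (sqrt a)\<^sup>2" using assms by (intro power_mono) auto
  then show "(min e (sqrt a))\<^sup>2 \<le> a" using assms by simp
qed

lemma divide_square_le_divide_square:
  fixes L s t :: real
  assumes "0 \<le> L" "0 < s" "s \<le> t"
  shows "L / t\<^sup>2 \<le> L / s\<^sup>2"
  using assms by (intro divide_left_mono power_mono) auto

lemma exists_balance_ge_near_zero:
  fixes N :: "'a set" and L c :: "'a \<Rightarrow> real"
  assumes "finite N" "N \<noteq> {}" "0 < L0" and L_pos: "\<And>i. i \<in> N \<Longrightarrow> 0 < L i"
    and "0 < c0" and c0_le: "\<And>i. i \<in> N \<Longrightarrow> c0 \<le> c i"
  obtains u where "0 < u" "u \<le> c0 / 2" "(\<Sum>i\<in>N. L i / (c i - u)\<^sup>2) \<le> L0 / u\<^sup>2"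
proof -
  define S where "S = (\<Sum>i\<in>N. L i)"
  have "0 < S" unfolding S_def using assms(1,2) L_pos by (intro sum_pos) auto
  obtain u where u: "0 < u" "u \<le> c0 / 2" "u\<^sup>2 \<le> L0 * c0\<^sup>2 / (4 * S)"
    using exists_pos_le_square_le[of "c0 / 2" "L0 * c0\<^sup>2 / (4 * S)"]
      \<open>0 < c0\<close> \<open>0 < S\<close> \<open>0 < L0\<close>
    by auto
  have "(\<Sum>i\<in>N. L i / (c i - u)\<^sup>2) \<le> (\<Sum>i\<in>N. L i / (c0 / 2)\<^sup>2)"
  proof (rule sum_mono)
    fix i assume "i \<in> N"
    then show "L i / (c i - u)\<^sup>2 \<le> L i / (c0 / 2)\<^sup>2"
      using c0_le[of i] u \<open>0 < c0\<close> L_pos[of i] by (intro divide_square_le_divide_square) auto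
  qed
  also have "\<dots> = S / (c0 / 2)\<^sup>2"
    unfolding S_def by (simp add: sum_divide_distrib)
  also have "\<dots> \<le> L0 / u\<^sup>2"
    using u \<open>0 < c0\<close> \<open>0 < S\<close> by (simp add: field_simps)
  finally show thesis using u that by blast
qed

lemma exists_balance_le_near_pole:
  fixes N :: "'a set" and L c :: "'a \<Rightarrow> real"
  assumes "finite N" "j \<in> N" "0 < L0" and L_nonneg: "\<And>i. i \<in> N \<Longrightarrow> 0 \<le> L i"
    and "0 < L j" "0 < c j"
  obtains d where "0 < d" "d \<le> c j / 2" "L0 / (c j - d)\<^sup>2 \<le> (\<Sum>i\<in>N. L i / (c i - (c j - d))\<^sup>2)"
proof -
  obtain d where d: "0 < d" "d \<le> c j / 2" "d\<^sup>2 \<le> L j * (c j)\<^sup>2 / (4 * L0)"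
    using exists_pos_le_square_le[of "c j / 2" "L j * (c j)\<^sup>2 / (4 * L0)"] assms(3,5,6) by auto
  have "L0 / (c j - d)\<^sup>2 \<le> L0 / (c j / 2)\<^sup>2"
    using d assms(3,6) by (intro divide_square_le_divide_square) auto
  also have "\<dots> \<le> L j / (c j - (c j - d))\<^sup>2"
    using d assms(3,6) by (simp add: field_simps)
  also have "\<dots> \<le> (\<Sum>i\<in>N. L i / (c i - (c j - d))\<^sup>2)"
    using assms(1,2) L_nonneg by (intro member_le_sum) auto
  finally show thesis using d that by blast
qed

lemma exists_balance_root:
  fixes N :: "'a set" and L c :: "'a \<Rightarrow> real"
  assumes "finite N" "N \<noteq> {}" "0 < L0"
    and L_pos: "\<And>i. i \<in> N \<Longrightarrow> 0 < L i" and c_pos: "\<And>i. i \<in> N \<Longrightarrow> 0 < c i"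
  obtains u where "0 < u" "\<And>i. i \<in> N \<Longrightarrow> u < c i"
    "L0 / u\<^sup>2 = (\<Sum>i\<in>N. L i / (c i - u)\<^sup>2)"
proof -
  define c0 where "c0 = Min (c ` N)"
  have "c0 \<in> c ` N" using assms(1,2) unfolding c0_def by simp
  then obtain j where j: "j \<in> N" "c j = c0" by auto
  have c0_le: "c0 \<le> c i" if "i \<in> N" for i
    using assms(1) that unfolding c0_def by simp
  have "0 < c0" using c_pos j by auto
  define f where "f u = L0 / u\<^sup>2 - (\<Sum>i\<in>N. L i / (c i - u)\<^sup>2)" for u
  obtain u1 where u1: "0 < u1" "u1 \<le> c0 / 2" "(\<Sum>i\<in>N. L i / (c i - u1)\<^sup>2) \<le> L0 / u1\<^sup>2"
    using exists_balance_ge_near_zero[of N L0 L c0 c, OF assms(1-3) L_pos \<open>0 < c0\<close> c0_le] .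
  have L_nonneg: "0 \<le> L i" if "i \<in> N" for i using L_pos[OF that] by simp
  obtain d where "0 < d" "d \<le> c j / 2"
    "L0 / (c j - d)\<^sup>2 \<le> (\<Sum>i\<in>N. L i / (c i - (c j - d))\<^sup>2)"
    using exists_balance_le_near_pole[of N j L0 L c,
        OF assms(1) j(1) assms(3) L_nonneg L_pos[OF j(1)] c_pos[OF j(1)]] .
  note d = this[unfolded j(2)]
  have "f (c0 - d) \<le> 0" "0 \<le> f u1" using u1 d unfolding f_def by simp_all
  have "isCont f x" if "u1 \<le> x" "x \<le> c0 - d" for x
  proof -
    have "x \<noteq> 0" "\<forall>i\<in>N. c i - x \<noteq> 0"
      using that u1 d c0_le by fastforce+
    then show ?thesis unfolding f_def by (intro continuous_intros) auto
  qed
  moreover have "u1 \<le> c0 - d" using u1 d by simp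
  ultimately obtain u where u: "u1 \<le> u" "u \<le> c0 - d" "f u = 0"
    using IVT2[of f "c0 - d" 0 u1, OF \<open>f (c0 - d) \<le> 0\<close> \<open>0 \<le> f u1\<close>] by blast
  show thesis
  proof
    show "0 < u" using u u1 by simp
    show "u < c i" if "i \<in> N" for i using u d c0_le[OF that] by simp
    show "L0 / u\<^sup>2 = (\<Sum>i\<in>N. L i / (c i - u)\<^sup>2)" using u unfolding f_def by simp
  qed
qed

lemma exists_balanced_block:
  fixes N :: "'a set" and L c :: "'a \<Rightarrow> real"
  assumes "finite N" "N \<noteq> {}" "m \<notin> N"
    and L_pos: "\<And>i. i \<in> insert m N \<Longrightarrow> 0 < L i" and c_pos: "\<And>i. i \<in> N \<Longrightarrow> 0 < c i"
  obtains a where "\<And>i. i \<in> insert m N \<Longrightarrow> 0 < a i"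
    "(a m)\<^sup>2 / L m = (\<Sum>i\<in>N. (a i)\<^sup>2 / L i)"
    "\<And>i. i \<in> N \<Longrightarrow> L i / a i + L m / a m = c i"
proof -
  obtain u where u: "0 < u" "\<And>i. i \<in> N \<Longrightarrow> u < c i"
    "L m / u\<^sup>2 = (\<Sum>i\<in>N. L i / (c i - u)\<^sup>2)"
    using exists_balance_root[of N "L m" L c] assms by auto
  define a where "a i = (if i = m then L m / u else L i / (c i - u))" for i
  show thesis
  proof
    show "0 < a i" if "i \<in> insert m N" for i
      using that u L_pos[OF that] unfolding a_def by auto
    have "(a m)\<^sup>2 / L m = L m / u\<^sup>2"
      using L_pos[of m] unfolding a_def by (simp add: power2_eq_square)
    also have "\<dots> = (\<Sum>i\<in>N. (a i)\<^sup>2 / L i)"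
      unfolding u(3) using \<open>m \<notin> N\<close> L_pos
      by (intro sum.cong) (auto simp: a_def power2_eq_square)
    finally show "(a m)\<^sup>2 / L m = (\<Sum>i\<in>N. (a i)\<^sup>2 / L i)" .
    show "L i / a i + L m / a m = c i" if "i \<in> N" for i
      using that \<open>m \<notin> N\<close> u L_pos[of i] L_pos[of m] unfolding a_def by auto
  qed
qed

section \<open>Bregman divergence of the reciprocal\<close>

definition bregman_recip :: "real \<Rightarrow> real \<Rightarrow> real \<Rightarrow> real" where
  "bregman_recip L a x = L / x - L / a + L * (x - a) / a\<^sup>2"

lemma bregman_recip_eq:
  assumes "0 < a" "0 < x"
  shows "bregman_recip L a x = L * (x - a)\<^sup>2 / (a\<^sup>2 * x)"
  using assms unfolding bregman_recip_def by (simp add: field_simps power2_eq_square)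

lemma bregman_recip_nonneg:
  assumes "0 \<le> L" "0 < a" "0 < x"
  shows "0 \<le> bregman_recip L a x"
  using assms by (simp add: bregman_recip_eq)

lemma bregman_recip_eq_0_iff:
  assumes "0 < L" "0 < a" "0 < x"
  shows "bregman_recip L a x = 0 \<longleftrightarrow> x = a"
  using assms by (simp add: bregman_recip_eq)

definition block_gap ::
    "('a \<Rightarrow> real) \<Rightarrow> ('a \<Rightarrow> real) \<Rightarrow> ('a \<Rightarrow> real) \<Rightarrow> 'a \<Rightarrow> 'a set \<Rightarrow> real" where
  "block_gap L a a' m N =
     (\<Sum>i\<in>N. (a i)\<^sup>2 / L i * (bregman_recip (L i) (a i) (a' i) + bregman_recip (L m) (a m) (a' m)))"

lemma block_gap_term_nonneg:
  assumes pos: "\<And>i. i \<in> insert m N \<Longrightarrow> 0 < L i \<and> 0 < a i \<and> 0 < a' i" and "i \<in> N"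
  shows "0 \<le> (a i)\<^sup>2 / L i * (bregman_recip (L i) (a i) (a' i) + bregman_recip (L m) (a m) (a' m))"
  using pos[of i] pos[of m] \<open>i \<in> N\<close>
  by (intro mult_nonneg_nonneg add_nonneg_nonneg bregman_recip_nonneg) auto

lemma block_gap_nonneg:
  assumes "\<And>i. i \<in> insert m N \<Longrightarrow> 0 < L i \<and> 0 < a i \<and> 0 < a' i"
  shows "0 \<le> block_gap L a a' m N"
  unfolding block_gap_def using assms by (intro sum_nonneg block_gap_term_nonneg)

lemma block_gap_eq_0_imp_eq:
  assumes "finite N" "N \<noteq> {}" "block_gap L a a' m N = 0"
    and pos: "\<And>i. i \<in> insert m N \<Longrightarrow> 0 < L i \<and> 0 < a i \<and> 0 < a' i"
    and "i \<in> insert m N"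
  shows "a' i = a i"
proof -
  have breg_0: "bregman_recip (L j) (a j) (a' j) = 0 \<and> bregman_recip (L m) (a m) (a' m) = 0"
    if "j \<in> N" for j
  proof -
    have terms: "0 \<le> (a l)\<^sup>2 / L l *
        (bregman_recip (L l) (a l) (a' l) + bregman_recip (L m) (a m) (a' m))" if "l \<in> N" for l
      using pos that by (rule block_gap_term_nonneg)
    have "(a j)\<^sup>2 / L j * (bregman_recip (L j) (a j) (a' j) + bregman_recip (L m) (a m) (a' m)) = 0"
      using assms(3) sum_nonneg_eq_0_iff[OF assms(1) terms] that unfolding block_gap_def by (simp only:)
    moreover have "0 < (a j)\<^sup>2 / L j" using pos[of j] that by (auto intro!: divide_pos_pos)
    ultimately have "bregman_recip (L j) (a j) (a' j) + bregman_recip (L m) (a m) (a' m) = 0"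
      by (metis mult_eq_0_iff less_irrefl)
    moreover have "0 \<le> bregman_recip (L j) (a j) (a' j)" "0 \<le> bregman_recip (L m) (a m) (a' m)"
      using pos[of j] pos[of m] that by (auto intro!: bregman_recip_nonneg)
    ultimately show ?thesis by simp
  qed
  obtain j where "j \<in> N" using assms(2) by blast
  then have "bregman_recip (L i) (a i) (a' i) = 0"
    using breg_0 \<open>i \<in> insert m N\<close> by auto
  then show ?thesis using pos[OF \<open>i \<in> insert m N\<close>] by (simp add: bregman_recip_eq_0_iff)
qed

(* The cost inequality makes the zeroth-order part of each divergence nonpositive, and by the
   balance equation the first-order terms of m add up to a' m - a m. *)
lemma block_gap_le:
  fixes N :: "'a set" and L a a' :: "'a \<Rightarrow> real"
  assumes "finite N" "m \<notin> N"
    and pos: "\<And>i. i \<in> insert m N \<Longrightarrow> 0 < L i \<and> 0 < a i"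
    and balance: "(a m)\<^sup>2 / L m = (\<Sum>i\<in>N. (a i)\<^sup>2 / L i)"
    and cost_le: "\<And>i. i \<in> N \<Longrightarrow> L i / a' i + L m / a' m \<le> L i / a i + L m / a m"
  shows "block_gap L a a' m N \<le> (\<Sum>i\<in>insert m N. a' i - a i)"
proof -
  define r where "r = L m / (a m)\<^sup>2 * (a' m - a m)"
  have "(a i)\<^sup>2 / L i * (bregman_recip (L i) (a i) (a' i) + bregman_recip (L m) (a m) (a' m))
      \<le> (a' i - a i) + (a i)\<^sup>2 / L i * r" if "i \<in> N" for i
  proof -
    have "(a i)\<^sup>2 / L i * (bregman_recip (L i) (a i) (a' i) + bregman_recip (L m) (a m) (a' m))
      = (a i)\<^sup>2 / L i * ((L i / a' i + L m / a' m) - (L i / a i + L m / a m))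
        + (a' i - a i) + (a i)\<^sup>2 / L i * r"
      using pos[of i] pos[of m] that
      unfolding bregman_recip_def r_def by (simp add: field_simps power2_eq_square)
    moreover have "(a i)\<^sup>2 / L i * ((L i / a' i + L m / a' m) - (L i / a i + L m / a m)) \<le> 0"
      using pos[of i] that cost_le[OF that] by (intro mult_nonneg_nonpos) auto
    ultimately show ?thesis by linarith
  qed
  then have "block_gap L a a' m N \<le> (\<Sum>i\<in>N. (a' i - a i) + (a i)\<^sup>2 / L i * r)"
    unfolding block_gap_def by (rule sum_mono)
  also have "\<dots> = (\<Sum>i\<in>N. a' i - a i) + (a m)\<^sup>2 / L m * r"
    by (simp add: sum.distrib balance sum_distrib_right)
  also have "(a m)\<^sup>2 / L m * r = a' m - a m"
    using pos[of m] unfolding r_def by simp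
  finally show ?thesis using assms(1,2) by simp
qed

section \<open>The weighted max-min problem\<close>

lemma ex1_strict_extremum:
  fixes R :: "nat \<Rightarrow> nat \<Rightarrow> bool"
  assumes "\<And>i j. R i j \<Longrightarrow> \<not> R j i" and "\<exists>i<k. \<forall>j<k. j \<noteq> i \<longrightarrow> R i j"
  shows "\<exists>!i. i < k \<and> (\<forall>j<k. j \<noteq> i \<longrightarrow> R i j)"
  using assms by metis

lemma ibest_strict_min:
  assumes "\<exists>i<k. \<forall>j<k. j \<noteq> i \<longrightarrow> y i b < y j b"
  shows "ibest k y b < k \<and> (\<forall>j<k. j \<noteq> ibest k y b \<longrightarrow> y (ibest k y b) b < y j b)"
  unfolding ibest_def by (rule theI'[OF ex1_strict_extremum]) (use assms in auto)

lemma Gfun_eq: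
  assumes "al i b \<noteq> 0" "al (ibest k y b) b \<noteq> 0"
  shows "Gfun k y lam al i b = (y i b - y (ibest k y b) b)\<^sup>2 /
           (2 * ((lam i b)\<^sup>2 / al i b + (lam (ibest k y b) b)\<^sup>2 / al (ibest k y b) b))"
  using assms unfolding Gfun_def Let_def by simp

lemma Gfun_nonneg:
  assumes "0 \<le> al i b" "0 \<le> al (ibest k y b) b"
  shows "0 \<le> Gfun k y lam al i b"
  using assms unfolding Gfun_def Let_def by simp

lemma Gfun_cong:
  assumes "al i b = al' i b" "al (ibest k y b) b = al' (ibest k y b) b"
  shows "Gfun k y lam al i b = Gfun k y lam al' i b"
  using assms unfolding Gfun_def Let_def by simp

lemma Gfun_scale:
  assumes "c \<noteq> 0"
  shows "Gfun k y lam (\<lambda>i b. c * al i b) i b = c * Gfun k y lam al i b"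
proof (cases "al i b = 0 \<or> al (ibest k y b) b = 0")
  case False
  let ?m = "ibest k y b"
  have "(lam i b)\<^sup>2 / (c * al i b) + (lam ?m b)\<^sup>2 / (c * al ?m b)
      = ((lam i b)\<^sup>2 / al i b + (lam ?m b)\<^sup>2 / al ?m b) / c"
    by (simp add: add_divide_distrib divide_divide_eq_left mult.commute)
  then show ?thesis using False assms unfolding Gfun_def Let_def
    by (simp add: divide_divide_eq_right mult.commute)
qed (auto simp: Gfun_def Let_def)

lemma balance_cond_scale:
  assumes "balance_cond k B y lam al"
  shows "balance_cond k B y lam (\<lambda>i b. c * al i b)"
  unfolding balance_cond_def
proof (intro allI impI)
  fix b assume "b < B"
  let ?m = "ibest k y b"
  have "(c * al ?m b)\<^sup>2 / (lam ?m b)\<^sup>2 = c\<^sup>2 * ((al ?m b)\<^sup>2 / (lam ?m b)\<^sup>2)"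
    by (simp add: power_mult_distrib)
  also have "\<dots> = c\<^sup>2 * (\<Sum>i\<in>{i. i < k \<and> i \<noteq> ?m}. (al i b)\<^sup>2 / (lam i b)\<^sup>2)"
    using assms \<open>b < B\<close> unfolding balance_cond_def by simp
  also have "\<dots> = (\<Sum>i\<in>{i. i < k \<and> i \<noteq> ?m}. (c * al i b)\<^sup>2 / (lam i b)\<^sup>2)"
    by (simp add: sum_distrib_left power_mult_distrib)
  finally show "(c * al ?m b)\<^sup>2 / (lam ?m b)\<^sup>2
      = (\<Sum>i\<in>{i. i < k \<and> i \<noteq> ?m}. (c * al i b)\<^sup>2 / (lam i b)\<^sup>2)" .
qed

definition suboptimal_pairs ::
    "nat \<Rightarrow> nat \<Rightarrow> (nat \<Rightarrow> nat \<Rightarrow> real) \<Rightarrow> (nat \<times> nat) set" where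
  "suboptimal_pairs k B y = {(i, b). i < k \<and> b < B \<and> i \<noteq> ibest k y b}"

definition weighted_min_rate :: "nat \<Rightarrow> nat \<Rightarrow> (nat \<Rightarrow> nat \<Rightarrow> real)
    \<Rightarrow> (nat \<Rightarrow> nat \<Rightarrow> real) \<Rightarrow> (nat \<Rightarrow> nat \<Rightarrow> real) \<Rightarrow> (nat \<Rightarrow> nat \<Rightarrow> real) \<Rightarrow> real" where
  "weighted_min_rate k B y lam w al =
     Min ((\<lambda>(i, b). w i b * Gfun k y lam al i b) ` suboptimal_pairs k B y)"

locale allocation_problem =
  fixes k B :: nat and y lam :: "nat \<Rightarrow> nat \<Rightarrow> real"
  assumes two_le_k: "2 \<le> k"
    and lam_pos: "\<And>i b. i < k \<Longrightarrow> b < B \<Longrightarrow> 0 < lam i b"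
    and best_unique: "\<And>b. b < B \<Longrightarrow> \<exists>i<k. \<forall>j<k. j \<noteq> i \<longrightarrow> y i b < y j b"
begin

abbreviation best :: "nat \<Rightarrow> nat" where "best \<equiv> ibest k y"
abbreviation others :: "nat \<Rightarrow> nat set" where "others b \<equiv> {i. i < k \<and> i \<noteq> best b}"
abbreviation pairs :: "(nat \<times> nat) set" where "pairs \<equiv> suboptimal_pairs k B y"
abbreviation rate :: "(nat \<Rightarrow> nat \<Rightarrow> real) \<Rightarrow> nat \<Rightarrow> nat \<Rightarrow> real" where
  "rate al \<equiv> Gfun k y lam al"

lemma best_less_k: "b < B \<Longrightarrow> best b < k"
  using ibest_strict_min[of k y b] best_unique[of b] by blast

lemma best_strict_min: "b < B \<Longrightarrow> j < k \<Longrightarrow> j \<noteq> best b \<Longrightarrow> y (best b) b < y j b"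
  using ibest_strict_min[of k y b] best_unique[of b] by blast

lemma insert_best_others: "b < B \<Longrightarrow> insert (best b) (others b) = {..<k}"
  using best_less_k by auto

lemma others_nonempty: "others b \<noteq> {}"
proof -
  have "0 \<in> others b \<or> 1 \<in> others b" using two_le_k by auto
  then show ?thesis by blast
qed

lemma mem_pairs_iff: "(i, b) \<in> pairs \<longleftrightarrow> i \<in> others b \<and> b < B"
  unfolding suboptimal_pairs_def by auto

lemma finite_pairs: "finite pairs"
  by (rule finite_subset[of _ "{..<k} \<times> {..<B}"]) (auto simp: mem_pairs_iff)

lemma pairs_nonempty:
  assumes "0 < B"
  shows "pairs \<noteq> {}"
proof -
  obtain i where "i \<in> others 0" using others_nonempty by blast
  then have "(i, 0) \<in> pairs" using assms by (simp add: mem_pairs_iff)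
  then show ?thesis by blast
qed

lemma rate_pos_iff:
  assumes "(i, b) \<in> pairs" "0 \<le> al i b" "0 \<le> al (best b) b"
  shows "0 < rate al i b \<longleftrightarrow> 0 < al i b \<and> 0 < al (best b) b"
proof (cases "al i b = 0 \<or> al (best b) b = 0")
  case True
  then show ?thesis unfolding Gfun_def Let_def by auto
next
  case False
  have "y (best b) b < y i b" "0 < lam i b" "0 < lam (best b) b"
    using assms(1) best_strict_min lam_pos best_less_k by (auto simp: mem_pairs_iff)
  then show ?thesis using False assms(2,3)
    by (auto simp: Gfun_eq intro!: divide_pos_pos add_pos_pos)
qed

lemma rate_nonneg:
  assumes "\<And>i b. i < k \<Longrightarrow> b < B \<Longrightarrow> 0 \<le> al i b" "(i, b) \<in> pairs"
  shows "0 \<le> rate al i b"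
  using assms best_less_k by (intro Gfun_nonneg) (auto simp: mem_pairs_iff)

lemma rate_le_rate_imp_cost_le:
  assumes "(i, b) \<in> pairs"
    and "0 < al i b" "0 < al (best b) b" "0 < be i b" "0 < be (best b) b"
    and "rate al i b \<le> rate be i b"
  shows "(lam i b)\<^sup>2 / be i b + (lam (best b) b)\<^sup>2 / be (best b) b
         \<le> (lam i b)\<^sup>2 / al i b + (lam (best b) b)\<^sup>2 / al (best b) b"
    (is "?cost be \<le> ?cost al")
proof (rule ccontr)
  assume "\<not> ?cost be \<le> ?cost al"
  have "y (best b) b < y i b" "0 < lam i b" "0 < lam (best b) b"
    using assms(1) best_strict_min lam_pos best_less_k by (auto simp: mem_pairs_iff)
  then have "0 < (y i b - y (best b) b)\<^sup>2" "0 < ?cost al" "0 < ?cost be"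
    using assms(2-5) by (auto intro!: add_pos_pos divide_pos_pos)
  then have "(y i b - y (best b) b)\<^sup>2 / (2 * ?cost be) < (y i b - y (best b) b)\<^sup>2 / (2 * ?cost al)"
    using \<open>\<not> ?cost be \<le> ?cost al\<close> by (intro divide_strict_left_mono) auto
  then show False using assms(2-6) by (simp add: Gfun_eq)
qed

lemma rate_cong:
  assumes "\<And>i b. i < k \<Longrightarrow> b < B \<Longrightarrow> al i b = al' i b" "(i, b) \<in> pairs"
  shows "rate al i b = rate al' i b"
  using assms best_less_k by (intro Gfun_cong) (auto simp: mem_pairs_iff)

lemma balance_cond_cong:
  assumes "\<And>i b. i < k \<Longrightarrow> b < B \<Longrightarrow> al i b = al' i b"
  shows "balance_cond k B y lam al \<longleftrightarrow> balance_cond k B y lam al'"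
proof -
  have "(\<Sum>i\<in>others b. (al i b)\<^sup>2 / (lam i b)\<^sup>2) = (\<Sum>i\<in>others b. (al' i b)\<^sup>2 / (lam i b)\<^sup>2)"
    if "b < B" for b
    using assms that by (intro sum.cong) auto
  then show ?thesis unfolding balance_cond_def using assms best_less_k by auto
qed

lemma equal_cond_rate_cong:
  assumes "\<And>i b. i < k \<Longrightarrow> b < B \<Longrightarrow> al i b = al' i b"
  shows "equal_cond pairs w (rate al) \<longleftrightarrow> equal_cond pairs w (rate al')"
proof -
  have "rate al i b = rate al' i b" if "(i, b) \<in> pairs" for i b
    using assms that by (rule rate_cong)
  then show ?thesis unfolding equal_cond_def by (simp add: Ball_def split_paired_all)
qed

lemma weighted_min_rate_le:
  "(i, b) \<in> pairs \<Longrightarrow> weighted_min_rate k B y lam w al \<le> w i b * rate al i b"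
  unfolding weighted_min_rate_def using finite_pairs by (intro Min_le) auto

lemma weighted_min_rate_eq:
  assumes "0 < B" "equal_cond pairs w (rate al)" "(i, b) \<in> pairs"
  shows "weighted_min_rate k B y lam w al = w i b * rate al i b"
proof -
  have "weighted_min_rate k B y lam w al \<in> (\<lambda>(i, b). w i b * rate al i b) ` pairs"
    unfolding weighted_min_rate_def using finite_pairs pairs_nonempty[OF assms(1)] by (intro Min_in) auto
  then obtain j b' where "(j, b') \<in> pairs" "weighted_min_rate k B y lam w al = w j b' * rate al j b'"
    by auto
  with assms(2,3) show ?thesis unfolding equal_cond_def by fastforce
qed

lemma weighted_min_rate_cong:
  assumes "\<And>i b. i < k \<Longrightarrow> b < B \<Longrightarrow> al i b = al' i b"
  shows "weighted_min_rate k B y lam w al = weighted_min_rate k B y lam w al'"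
proof -
  have "rate al i b = rate al' i b" if "(i, b) \<in> pairs" for i b
    using assms that by (rule rate_cong)
  then show ?thesis unfolding weighted_min_rate_def by (intro arg_cong[where f = Min] image_cong) auto
qed

lemma pos_if_rates_pos:
  assumes "\<And>i b. i < k \<Longrightarrow> b < B \<Longrightarrow> 0 \<le> al i b"
    and "\<And>i b. (i, b) \<in> pairs \<Longrightarrow> 0 < rate al i b"
    and "i < k" "b < B"
  shows "0 < al i b"
proof -
  have pos: "0 < al j b \<and> 0 < al (best b) b" if "j \<in> others b" for j
    using that assms rate_pos_iff[of j b al] best_less_k by (auto simp: mem_pairs_iff)
  obtain j where "j \<in> others b" using others_nonempty by blast
  then show ?thesis using pos[of i] pos[of j] assms(3) by (cases "i = best b") auto
qed

lemma balance_best_eq_0_iff: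
  assumes "balance_cond k B y lam al" "b < B"
  shows "al (best b) b = 0 \<longleftrightarrow> (\<forall>i\<in>others b. al i b = 0)"
proof -
  have lam_nz: "lam i b \<noteq> 0" if "i < k" for i
    using lam_pos[OF that assms(2)] by simp
  have "al (best b) b = 0 \<longleftrightarrow> (al (best b) b)\<^sup>2 / (lam (best b) b)\<^sup>2 = 0"
    using lam_nz best_less_k[OF assms(2)] by simp
  also have "\<dots> \<longleftrightarrow> (\<Sum>i\<in>others b. (al i b)\<^sup>2 / (lam i b)\<^sup>2) = 0"
    using assms unfolding balance_cond_def by simp
  also have "\<dots> \<longleftrightarrow> (\<forall>i\<in>others b. al i b = 0)"
    using lam_nz by (subst sum_nonneg_eq_0_iff) auto
  finally show ?thesis .
qed

lemma balanced_equalizing_pos: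
  assumes "feasible k B al" "balance_cond k B y lam al" "equal_cond pairs w (rate al)"
    and w_pos: "\<And>i b. (i, b) \<in> pairs \<Longrightarrow> 0 < w i b"
    and "i < k" "b < B"
  shows "0 < al i b"
proof -
  have nonneg: "\<And>i b. i < k \<Longrightarrow> b < B \<Longrightarrow> 0 \<le> al i b"
    using assms(1) unfolding feasible_def by blast
  have "\<exists>i<k. \<exists>b<B. al i b \<noteq> 0"
  proof (rule ccontr)
    assume "\<not> ?thesis"
    then have "(\<Sum>i<k. \<Sum>b<B. al i b) = 0" by simp
    then show False using assms(1) unfolding feasible_def by simp
  qed
  then obtain i0 b0 where "i0 < k" "b0 < B" "al i0 b0 \<noteq> 0" by blast
  then have "al (best b0) b0 \<noteq> 0"
    using balance_best_eq_0_iff[OF assms(2)] by (cases "i0 = best b0") auto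
  then obtain j where j: "j \<in> others b0" "al j b0 \<noteq> 0"
    using balance_best_eq_0_iff[OF assms(2) \<open>b0 < B\<close>] by blast
  then have "(j, b0) \<in> pairs" "0 < rate al j b0"
    using \<open>b0 < B\<close> \<open>al (best b0) b0 \<noteq> 0\<close> nonneg rate_pos_iff[of j b0 al] best_less_k
    by (auto simp: mem_pairs_iff order_less_le)
  have "0 < rate al i' b'" if "(i', b') \<in> pairs" for i' b'
  proof -
    have "w i' b' * rate al i' b' = w j b0 * rate al j b0"
      using assms(3) that \<open>(j, b0) \<in> pairs\<close> unfolding equal_cond_def by fast
    also have "\<dots> > 0" using w_pos \<open>(j, b0) \<in> pairs\<close> \<open>0 < rate al j b0\<close> by simp
    finally show ?thesis using w_pos[OF that] by (simp add: zero_less_mult_iff)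
  qed
  then show ?thesis using pos_if_rates_pos nonneg assms(5,6) by blast
qed

lemma pos_if_rates_dominate:
  assumes al_pos: "\<And>i b. i < k \<Longrightarrow> b < B \<Longrightarrow> 0 < al i b" and "feasible k B be"
    and rate_le: "\<And>i b. (i, b) \<in> pairs \<Longrightarrow> rate al i b \<le> rate be i b"
    and "i < k" "b < B"
  shows "0 < be i b"
proof (rule pos_if_rates_pos[OF _ _ assms(4,5)])
  show "0 \<le> be i b" if "i < k" "b < B" for i b
    using assms(2) that unfolding feasible_def by blast
  show "0 < rate be i b" if "(i, b) \<in> pairs" for i b
  proof -
    have "0 < al i b" "0 < al (best b) b"
      using that al_pos best_less_k by (auto simp: mem_pairs_iff)
    then have "0 < rate al i b" using rate_pos_iff[OF that, of al] by simp
    then show ?thesis using rate_le[OF that] by linarith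
  qed
qed

lemma balanced_block_gap_le:
  assumes "balance_cond k B y lam al" "b < B"
    and pos: "\<And>i. i < k \<Longrightarrow> 0 < al i b \<and> 0 < be i b"
    and rate_le: "\<And>i. i \<in> others b \<Longrightarrow> rate al i b \<le> rate be i b"
  shows "block_gap (\<lambda>i. (lam i b)\<^sup>2) (\<lambda>i. al i b) (\<lambda>i. be i b) (best b) (others b)
         \<le> (\<Sum>i<k. be i b - al i b)"
proof -
  have "block_gap (\<lambda>i. (lam i b)\<^sup>2) (\<lambda>i. al i b) (\<lambda>i. be i b) (best b) (others b)
      \<le> (\<Sum>i\<in>insert (best b) (others b). be i b - al i b)"
  proof (rule block_gap_le)
    show "0 < (lam i b)\<^sup>2 \<and> 0 < al i b" if "i \<in> insert (best b) (others b)" for i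
      using that pos lam_pos[of i b] best_less_k \<open>b < B\<close> by auto
    show "(al (best b) b)\<^sup>2 / (lam (best b) b)\<^sup>2 = (\<Sum>i\<in>others b. (al i b)\<^sup>2 / (lam i b)\<^sup>2)"
      using assms(1,2) unfolding balance_cond_def by blast
    show "(lam i b)\<^sup>2 / be i b + (lam (best b) b)\<^sup>2 / be (best b) b
        \<le> (lam i b)\<^sup>2 / al i b + (lam (best b) b)\<^sup>2 / al (best b) b" if "i \<in> others b" for i
      using that \<open>b < B\<close> pos best_less_k rate_le
      by (intro rate_le_rate_imp_cost_le) (auto simp: mem_pairs_iff)
  qed auto
  then show ?thesis using insert_best_others[OF \<open>b < B\<close>] by simp
qed

lemma balanced_eq_if_rates_le:
  assumes "feasible k B al" "balance_cond k B y lam al"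
    and al_pos: "\<And>i b. i < k \<Longrightarrow> b < B \<Longrightarrow> 0 < al i b"
    and "feasible k B be"
    and rate_le: "\<And>i b. (i, b) \<in> pairs \<Longrightarrow> rate al i b \<le> rate be i b"
    and "i < k" "b < B"
  shows "be i b = al i b"
proof -
  define gap where
    "gap b = block_gap (\<lambda>i. (lam i b)\<^sup>2) (\<lambda>i. al i b) (\<lambda>i. be i b) (best b) (others b)" for b
  have pos: "0 < al i b \<and> 0 < be i b" if "i < k" "b < B" for i b
    using al_pos pos_if_rates_dominate[OF al_pos assms(4) rate_le] that by blast
  have pos': "0 < (lam i b)\<^sup>2 \<and> 0 < al i b \<and> 0 < be i b"
    if "i \<in> insert (best b) (others b)" "b < B" for i b
    using that pos[of i b] lam_pos[of i b] best_less_k by auto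
  have gap_le: "gap b \<le> (\<Sum>i<k. be i b - al i b)" if "b < B" for b
    unfolding gap_def using assms(2) that pos rate_le
    by (intro balanced_block_gap_le) (auto simp: mem_pairs_iff)
  have gap_nonneg: "0 \<le> gap b" if "b < B" for b
    unfolding gap_def using pos' that by (intro block_gap_nonneg) auto
  have "(\<Sum>b<B. gap b) \<le> (\<Sum>b<B. \<Sum>i<k. be i b - al i b)"
    using gap_le by (rule sum_mono) simp
  also have "\<dots> = (\<Sum>i<k. \<Sum>b<B. be i b) - (\<Sum>i<k. \<Sum>b<B. al i b)"
    by (simp add: sum_subtractf sum.swap[of _ "{..<B}"])
  also have "\<dots> = 0" using assms(1,4) unfolding feasible_def by simp
  finally have "(\<Sum>b<B. gap b) = 0"
    using gap_nonneg by (metis lessThan_iff order_antisym sum_nonneg)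
  then have "gap b = 0"
    using gap_nonneg \<open>b < B\<close> by (intro sum_nonneg_0[of "{..<B}" gap]) auto
  then show ?thesis
    using block_gap_eq_0_imp_eq[of "others b" "\<lambda>i. (lam i b)\<^sup>2" "\<lambda>i. al i b" "\<lambda>i. be i b"
        "best b" i]
      others_nonempty pos' \<open>b < B\<close> insert_best_others[OF \<open>b < B\<close>] \<open>i < k\<close>
    unfolding gap_def by auto
qed

lemma exists_balanced_block_at:
  assumes "b < B" and w_pos: "\<And>i. i \<in> others b \<Longrightarrow> 0 < w i"
  obtains a where "\<And>i. i < k \<Longrightarrow> 0 < a i"
    "(a (best b))\<^sup>2 / (lam (best b) b)\<^sup>2 = (\<Sum>i\<in>others b. (a i)\<^sup>2 / (lam i b)\<^sup>2)"
    "\<And>i. i \<in> others b \<Longrightarrow>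
      (lam i b)\<^sup>2 / a i + (lam (best b) b)\<^sup>2 / a (best b) = w i * (y i b - y (best b) b)\<^sup>2 / 2"
proof -
  have "0 < w i * (y i b - y (best b) b)\<^sup>2 / 2" if "i \<in> others b" for i
    using that w_pos[of i] best_strict_min[OF \<open>b < B\<close>, of i] by simp
  moreover have "0 < (lam i b)\<^sup>2" if "i \<in> insert (best b) (others b)" for i
    using that lam_pos[of i b] best_less_k[OF \<open>b < B\<close>] \<open>b < B\<close> by auto
  ultimately obtain a where a: "\<And>i. i \<in> insert (best b) (others b) \<Longrightarrow> 0 < a i"
    "(a (best b))\<^sup>2 / (lam (best b) b)\<^sup>2 = (\<Sum>i\<in>others b. (a i)\<^sup>2 / (lam i b)\<^sup>2)"
    "\<And>i. i \<in> others b \<Longrightarrow>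
      (lam i b)\<^sup>2 / a i + (lam (best b) b)\<^sup>2 / a (best b) = w i * (y i b - y (best b) b)\<^sup>2 / 2"
    using exists_balanced_block[of "others b" "best b" "\<lambda>i. (lam i b)\<^sup>2"
        "\<lambda>i. w i * (y i b - y (best b) b)\<^sup>2 / 2"] others_nonempty
    by auto
  show thesis
  proof (rule that)
    show "0 < a i" if "i < k" for i
      using a(1)[of i] that insert_best_others[OF \<open>b < B\<close>] by simp
  qed (use a in auto)
qed

lemma exists_pos_balanced_equalizing:
  assumes w_pos: "\<And>i b. (i, b) \<in> pairs \<Longrightarrow> 0 < w i b"
  obtains A where "\<And>i b. i < k \<Longrightarrow> b < B \<Longrightarrow> 0 < A i b" "balance_cond k B y lam A"
    "\<And>i b. (i, b) \<in> pairs \<Longrightarrow> w i b * rate A i b = 1"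
proof -
  \<comment> \<open>The prescribed costs w_i (y_i - y_{i^b})^2 / 2 make every weighted rate equal to 1.\<close>
  define good where "good b a \<longleftrightarrow> (\<forall>i<k. 0 < a i)
      \<and> (a (best b))\<^sup>2 / (lam (best b) b)\<^sup>2 = (\<Sum>i\<in>others b. (a i)\<^sup>2 / (lam i b)\<^sup>2)
      \<and> (\<forall>i\<in>others b. (lam i b)\<^sup>2 / a i + (lam (best b) b)\<^sup>2 / a (best b)
            = w i b * (y i b - y (best b) b)\<^sup>2 / 2)" for b a
  have "\<forall>b\<in>{..<B}. \<exists>a. good b a"
  proof
    fix b assume "b \<in> {..<B}"
    then have "b < B" by simp
    have w_pos_b: "0 < w i b" if "i \<in> others b" for i
      using w_pos that \<open>b < B\<close> by (simp add: mem_pairs_iff)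
    obtain a where "\<And>i. i < k \<Longrightarrow> 0 < a i"
      "(a (best b))\<^sup>2 / (lam (best b) b)\<^sup>2 = (\<Sum>i\<in>others b. (a i)\<^sup>2 / (lam i b)\<^sup>2)"
      "\<And>i. i \<in> others b \<Longrightarrow> (lam i b)\<^sup>2 / a i + (lam (best b) b)\<^sup>2 / a (best b)
          = w i b * (y i b - y (best b) b)\<^sup>2 / 2"
      using exists_balanced_block_at[of b "\<lambda>i. w i b", OF \<open>b < B\<close> w_pos_b] by blast
    then have "good b a" unfolding good_def by simp
    then show "\<exists>a. good b a" by blast
  qed
  from bchoice[OF this] obtain a where "\<forall>b\<in>{..<B}. good b (a b)" by blast
  then have a_pos: "\<And>i b. i < k \<Longrightarrow> b < B \<Longrightarrow> 0 < a b i"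
    and a_balance: "\<And>b. b < B \<Longrightarrow> (a b (best b))\<^sup>2 / (lam (best b) b)\<^sup>2
      = (\<Sum>i\<in>others b. (a b i)\<^sup>2 / (lam i b)\<^sup>2)"
    and a_cost: "\<And>i b. b < B \<Longrightarrow> i \<in> others b \<Longrightarrow>
      (lam i b)\<^sup>2 / a b i + (lam (best b) b)\<^sup>2 / a b (best b) = w i b * (y i b - y (best b) b)\<^sup>2 / 2"
    unfolding good_def by auto
  show thesis
  proof
    show "0 < a b i" if "i < k" "b < B" for i b using a_pos that .
    show "balance_cond k B y lam (\<lambda>i b. a b i)"
      unfolding balance_cond_def using a_balance by simp
    show "w i b * rate (\<lambda>i b. a b i) i b = 1" if "(i, b) \<in> pairs" for i b
    proof -
      have ib: "i \<in> others b" "b < B" using that by (auto simp: mem_pairs_iff)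
      then have "0 < a b i" "0 < a b (best b)" using a_pos best_less_k by auto
      then have "rate (\<lambda>i b. a b i) i b = (y i b - y (best b) b)\<^sup>2 /
          (2 * ((lam i b)\<^sup>2 / a b i + (lam (best b) b)\<^sup>2 / a b (best b)))"
        by (intro Gfun_eq[of "\<lambda>i b. a b i"]) auto
      also have "\<dots> = (y i b - y (best b) b)\<^sup>2 / (2 * (w i b * (y i b - y (best b) b)\<^sup>2 / 2))"
        unfolding a_cost[OF ib(2,1)] ..
      finally have "rate (\<lambda>i b. a b i) i b
          = (y i b - y (best b) b)\<^sup>2 / (w i b * (y i b - y (best b) b)\<^sup>2)"
        by simp
      moreover have "y i b \<noteq> y (best b) b" using best_strict_min ib by fastforce
      ultimately show ?thesis using w_pos[OF that] by simp
    qed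
  qed
qed

lemma exists_balanced_equalizing:
  assumes "0 < B" and w_pos: "\<And>i b. (i, b) \<in> pairs \<Longrightarrow> 0 < w i b"
  obtains al where "feasible k B al" "balance_cond k B y lam al" "equal_cond pairs w (rate al)"
proof -
  obtain A where A_pos: "\<And>i b. i < k \<Longrightarrow> b < B \<Longrightarrow> 0 < A i b"
    and A_balance: "balance_cond k B y lam A"
    and A_rate: "\<And>i b. (i, b) \<in> pairs \<Longrightarrow> w i b * rate A i b = 1"
    using exists_pos_balanced_equalizing[of w, OF w_pos] by blast
  define T where "T = (\<Sum>i<k. \<Sum>b<B. A i b)"
  have "0 \<in> {..<k}" "0 \<in> {..<B}" using two_le_k \<open>0 < B\<close> by auto
  then have "{..<k} \<noteq> {}" "{..<B} \<noteq> {}" by blast+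
  then have "0 < T" unfolding T_def using A_pos by (intro sum_pos) auto
  define al where "al i b = 1 / T * A i b" for i b
  show thesis
  proof
    have "(\<Sum>i<k. \<Sum>b<B. al i b) = (\<Sum>i<k. \<Sum>b<B. A i b) / T"
      unfolding al_def by (simp add: sum_divide_distrib[symmetric])
    also have "\<dots> = 1" using \<open>0 < T\<close> by (simp add: T_def[symmetric])
    finally have "(\<Sum>i<k. \<Sum>b<B. al i b) = 1" .
    moreover have "0 \<le> al i b" if "i < k" "b < B" for i b
      using A_pos[OF that] \<open>0 < T\<close> unfolding al_def by simp
    ultimately show "feasible k B al" unfolding feasible_def by simp
    show "balance_cond k B y lam al"
      unfolding al_def using A_balance by (rule balance_cond_scale)
    have "w i b * rate al i b = 1 / T" if "(i, b) \<in> pairs" for i b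
      using A_rate[OF that] Gfun_scale[where c = "1 / T" and al = A] \<open>0 < T\<close>
      unfolding al_def by simp
    then show "equal_cond pairs w (rate al)" unfolding equal_cond_def by auto
  qed
qed

lemma optimal_if_balanced_equalizing:
  assumes w_pos: "\<And>i b. (i, b) \<in> pairs \<Longrightarrow> 0 < w i b"
    and "feasible k B al" "balance_cond k B y lam al" "equal_cond pairs w (rate al)"
  shows "optimal k B (weighted_min_rate k B y lam w) al"
proof -
  have "0 < B" using \<open>feasible k B al\<close> unfolding feasible_def by (cases B) auto
  have al_pos: "0 < al i b" if "i < k" "b < B" for i b
    using assms(2-4) w_pos that by (rule balanced_equalizing_pos)
  have "weighted_min_rate k B y lam w al' \<le> weighted_min_rate k B y lam w al"
    if "feasible k B al'" for al'
  proof (rule ccontr)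
    assume less: "\<not> ?thesis"
    have rate_le: "rate al i b \<le> rate al' i b" if "(i, b) \<in> pairs" for i b
    proof -
      have "w i b * rate al i b = weighted_min_rate k B y lam w al"
        using weighted_min_rate_eq[OF \<open>0 < B\<close> assms(4) that] by simp
      also have "\<dots> \<le> weighted_min_rate k B y lam w al'" using less by simp
      also have "\<dots> \<le> w i b * rate al' i b" using that by (rule weighted_min_rate_le)
      finally show ?thesis using w_pos[OF that] by simp
    qed
    have eq: "al' i b = al i b" if "i < k" "b < B" for i b
      using assms(2,3) al_pos \<open>feasible k B al'\<close> rate_le that by (rule balanced_eq_if_rates_le)
    show False using less weighted_min_rate_cong[OF eq] by simp
  qed
  then show ?thesis using \<open>feasible k B al\<close> unfolding optimal_def by blast
qed

lemma balanced_equalizing_if_optimal: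
  assumes w_pos: "\<And>i b. (i, b) \<in> pairs \<Longrightarrow> 0 < w i b"
    and opt: "optimal k B (weighted_min_rate k B y lam w) al"
  shows "balance_cond k B y lam al \<and> equal_cond pairs w (rate al)"
proof -
  have "feasible k B al" using opt unfolding optimal_def by blast
  then have "0 < B" unfolding feasible_def by (cases B) auto
  obtain al' where al': "feasible k B al'" "balance_cond k B y lam al'" "equal_cond pairs w (rate al')"
    using exists_balanced_equalizing[of w, OF \<open>0 < B\<close> w_pos] by blast
  have al'_pos: "0 < al' i b" if "i < k" "b < B" for i b
    using al' w_pos that by (rule balanced_equalizing_pos)
  have rate_le: "rate al' i b \<le> rate al i b" if "(i, b) \<in> pairs" for i b
  proof -
    have "w i b * rate al' i b = weighted_min_rate k B y lam w al'"
      using weighted_min_rate_eq[OF \<open>0 < B\<close> al'(3) that] by simp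
    also have "\<dots> \<le> weighted_min_rate k B y lam w al"
      using opt al'(1) unfolding optimal_def by blast
    also have "\<dots> \<le> w i b * rate al i b" using that by (rule weighted_min_rate_le)
    finally show ?thesis using w_pos[OF that] by simp
  qed
  have eq: "al i b = al' i b" if "i < k" "b < B" for i b
    using al'(1,2) al'_pos \<open>feasible k B al\<close> rate_le that by (rule balanced_eq_if_rates_le)
  show ?thesis
    using al'(2,3) balance_cond_cong[OF eq] equal_cond_rate_cong[OF eq] by simp
qed

theorem optimal_weighted_min_rate_iff:
  assumes "\<And>i b. (i, b) \<in> pairs \<Longrightarrow> 0 < w i b" "feasible k B al"
  shows "optimal k B (weighted_min_rate k B y lam w) al \<longleftrightarrow>
           balance_cond k B y lam al \<and> equal_cond pairs w (rate al)"
proof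
  show "balance_cond k B y lam al \<and> equal_cond pairs w (rate al)"
    if "optimal k B (weighted_min_rate k B y lam w) al"
    using assms(1) that by (rule balanced_equalizing_if_optimal)
  show "optimal k B (weighted_min_rate k B y lam w) al"
    if "balance_cond k B y lam al \<and> equal_cond pairs w (rate al)"
    using assms that by (intro optimal_if_balanced_equalizing) auto
qed

end

section \<open>The objectives (ACC) and (FN)\<close>

lemma istar_less:
  assumes "\<exists>i<k. \<forall>j<k. j \<noteq> i \<longrightarrow> freq k B p y j < freq k B p y i"
  shows "istar k B p y < k"
  using theI'[OF ex1_strict_extremum[OF _ assms]] unfolding istar_def by auto

lemma Min_eq_Min_if_dominated:
  fixes D E :: "'a::linorder set"
  assumes "finite E" "D \<subseteq> E" "\<And>e. e \<in> E \<Longrightarrow> \<exists>d\<in>D. d \<le> e"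
  shows "Min E = Min D"
proof (cases "E = {}")
  case False
  then have "D \<noteq> {}" using assms(3) by blast
  have "finite D" using assms(1,2) by (rule finite_subset[rotated])
  show ?thesis
  proof (rule Min_eqI[OF assms(1)])
    show "Min D \<le> e" if "e \<in> E" for e
      using assms(3)[OF that] \<open>finite D\<close> by (auto intro: order_trans[OF Min_le])
    show "Min D \<in> E" using Min_in[OF \<open>finite D\<close> \<open>D \<noteq> {}\<close>] assms(2) by blast
  qed
qed (use assms(2) in simp)

lemma Wfun_ge_1: "1 \<le> Wfun k B p y i b"
  unfolding Wfun_def by simp

lemma WACC_ge_1: "1 \<le> WACC k B p y i b"
  unfolding WACC_def using Wfun_ge_1 by simp

lemma WFN_ge_1: "1 \<le> WFN k B p y i b"
  unfolding WFN_def using Wfun_ge_1 by simp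

definition objACC_terms :: "nat \<Rightarrow> nat \<Rightarrow> (nat \<Rightarrow> real) \<Rightarrow> (nat \<Rightarrow> nat \<Rightarrow> real)
    \<Rightarrow> (nat \<Rightarrow> nat \<Rightarrow> real) \<Rightarrow> (nat \<Rightarrow> nat \<Rightarrow> real) \<Rightarrow> real set" where
  "objACC_terms k B p y lam al =
     {Wfun k B p y i b * Gfun k y lam al i b | i b. (i, b) \<in> Xi k B p y}
     \<union> {Gfun k y lam al i b | i b. i < k \<and> i \<noteq> istar k B p y \<and> b \<in> Theta k B y (istar k B p y)}
     \<union> {Gfun k y lam al (istar k B p y) b | b. b < B \<and> b \<notin> Theta k B y (istar k B p y)}"

lemma objACC_eq_Min_terms: "objACC k B p y lam al = Min (objACC_terms k B p y lam al)"
  unfolding objACC_def objACC_terms_def ..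

lemma WACC_eq_1:
  assumes "b < B" "b \<in> Theta k B y (istar k B p y) \<or> i = istar k B p y"
  shows "WACC k B p y i b = 1"
  using assms unfolding WACC_def Xiadv_def by auto

lemma optimal_cong:
  assumes "\<And>al. feasible k B al \<Longrightarrow> obj al = obj' al"
  shows "optimal k B obj al \<longleftrightarrow> optimal k B obj' al"
  using assms unfolding optimal_def by auto

context allocation_problem
begin

lemma Xi_Un_Xiadv:
  assumes "istar k B p y < k"
  shows "Xi k B p y \<union> Xiadv k B p y = pairs"
  using assms unfolding Xi_def Xiadv_def Theta_def suboptimal_pairs_def by auto

lemma objFN_eq_weighted_min_rate:
  assumes "istar k B p y < k"
  shows "objFN k B p y lam al = weighted_min_rate k B y lam (WFN k B p y) al"
proof -
  have "{Wfun k B p y i b * rate al i b | i b. (i, b) \<in> Xi k B p y}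
        \<union> {rate al (istar k B p y) b | b. b < B \<and> b \<notin> Theta k B y (istar k B p y)}
      = (\<lambda>(i, b). WFN k B p y i b * rate al i b) ` (Xi k B p y \<union> Xiadv k B p y)"
    unfolding WFN_def Xiadv_def by (auto simp: Xi_def) force+
  then show ?thesis
    unfolding objFN_def weighted_min_rate_def Xi_Un_Xiadv[OF assms] by simp
qed

lemma WACC_rate_mem_objACC_terms:
  assumes "(i, b) \<in> pairs"
  shows "WACC k B p y i b * rate al i b \<in> objACC_terms k B p y lam al"
proof -
  let ?s = "istar k B p y"
  have "i < k" "b < B" "i \<noteq> best b" using assms by (auto simp: mem_pairs_iff)
  consider (Theta) "b \<in> Theta k B y ?s" | (adv) "b \<notin> Theta k B y ?s" "i = ?s"
    | (Xi) "b \<notin> Theta k B y ?s" "i \<noteq> ?s" by blast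
  then show ?thesis
  proof cases
    case Theta
    then have "i \<noteq> ?s" using \<open>i \<noteq> best b\<close> by (simp add: Theta_def)
    then show ?thesis
      using Theta \<open>i < k\<close> WACC_eq_1[OF \<open>b < B\<close>] unfolding objACC_terms_def by auto
  next
    case adv
    then show ?thesis using \<open>b < B\<close> WACC_eq_1[OF \<open>b < B\<close>] unfolding objACC_terms_def by auto
  next
    case Xi
    then have "(i, b) \<in> Xi k B p y" "WACC k B p y i b = Wfun k B p y i b"
      using \<open>i < k\<close> \<open>b < B\<close> \<open>i \<noteq> best b\<close> by (auto simp: Xi_def WACC_def Xiadv_def)
    then show ?thesis unfolding objACC_terms_def by auto
  qed
qed

lemma objACC_terms_dominated:
  assumes "istar k B p y < k" and nonneg: "\<And>i b. i < k \<Longrightarrow> b < B \<Longrightarrow> 0 \<le> al i b"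
    and "e \<in> objACC_terms k B p y lam al"
  shows "\<exists>d\<in>(\<lambda>(i, b). WACC k B p y i b * rate al i b) ` pairs. d \<le> e"
proof -
  let ?s = "istar k B p y"
  consider (Xi) i b where "(i, b) \<in> Xi k B p y" "e = Wfun k B p y i b * rate al i b"
    | (Theta) i b where "i < k" "i \<noteq> ?s" "b \<in> Theta k B y ?s" "e = rate al i b"
    | (adv) b where "b < B" "b \<notin> Theta k B y ?s" "e = rate al ?s b"
    using assms(3) unfolding objACC_terms_def by blast
  then obtain i b where "(i, b) \<in> pairs" "WACC k B p y i b * rate al i b \<le> e"
  proof cases
    case Xi
    then have "(i, b) \<in> pairs" using Xi_Un_Xiadv[OF assms(1)] by blast
    moreover have "WACC k B p y i b * rate al i b \<le> e"
    proof (cases "b \<in> Theta k B y ?s")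
      case True
      then have "b < B" by (simp add: Theta_def)
      have "0 \<le> rate al i b" using nonneg \<open>(i, b) \<in> pairs\<close> by (rule rate_nonneg)
      then show ?thesis using Xi True WACC_eq_1[OF \<open>b < B\<close>] Wfun_ge_1[of k B p y i b]
        by (simp add: mult_le_cancel_right1)
    qed (use Xi in \<open>simp add: WACC_def Xiadv_def Xi_def\<close>)
    ultimately show thesis by (rule that)
  next
    case Theta
    then have "(i, b) \<in> pairs" "b < B" by (auto simp: Theta_def suboptimal_pairs_def)
    moreover have "WACC k B p y i b = 1" using WACC_eq_1 \<open>b < B\<close> Theta by blast
    ultimately show thesis using Theta by (intro that) auto
  next
    case adv
    then have "(?s, b) \<in> pairs" using assms(1) by (auto simp: Theta_def suboptimal_pairs_def)
    moreover have "WACC k B p y ?s b = 1" using WACC_eq_1 \<open>b < B\<close> by blast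
    ultimately show thesis using adv by (intro that) auto
  qed
  then show ?thesis by (intro bexI[where x = "WACC k B p y i b * rate al i b"]) auto
qed

lemma objACC_eq_weighted_min_rate:
  assumes "istar k B p y < k" and "\<And>i b. i < k \<Longrightarrow> b < B \<Longrightarrow> 0 \<le> al i b"
  shows "objACC k B p y lam al = weighted_min_rate k B y lam (WACC k B p y) al"
proof -
  have "objACC_terms k B p y lam al
      \<subseteq> (\<lambda>(i, b). Wfun k B p y i b * rate al i b) ` pairs \<union> (\<lambda>(i, b). rate al i b) ` pairs"
    using assms(1) unfolding objACC_terms_def by (auto simp: Xi_def Theta_def suboptimal_pairs_def)
  then have "finite (objACC_terms k B p y lam al)" by (rule finite_subset) (simp add: finite_pairs)
  then show ?thesis
    unfolding objACC_eq_Min_terms weighted_min_rate_def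
    using WACC_rate_mem_objACC_terms objACC_terms_dominated[OF assms]
    by (intro Min_eq_Min_if_dominated) auto
qed

end

theorem theorem5:
  fixes k B :: nat and p :: "nat \<Rightarrow> real" and y lam al :: "nat \<Rightarrow> nat \<Rightarrow> real"
  assumes k2: "k \<ge> 2"
    and p_pos: "\<forall>b<B. p b > 0"
    and p_sum: "(\<Sum>b<B. p b) = 1"
    and lam_pos: "\<forall>i<k. \<forall>b<B. lam i b > 0"
    and best_unique: "\<forall>b<B. \<exists>i<k. \<forall>j<k. j \<noteq> i \<longrightarrow> y i b < y j b"
    and istar_unique: "\<exists>i<k. \<forall>j<k. j \<noteq> i \<longrightarrow> freq k B p y j < freq k B p y i"
    and feas: "feasible k B al"
  shows "(optimal k B (objACC k B p y lam) al \<longleftrightarrow>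
            balance_cond k B y lam al \<and>
            equal_cond (Xi k B p y \<union> Xiadv k B p y) (WACC k B p y) (Gfun k y lam al))
       \<and> (optimal k B (objFN k B p y lam) al \<longleftrightarrow>
            balance_cond k B y lam al \<and>
            equal_cond (Xi k B p y \<union> Xiadv k B p y) (WFN k B p y) (Gfun k y lam al))"
proof -
  \<comment> \<open>Of the weights only W \<ge> 1 matters.\<close>
  interpret allocation_problem k B y lam
    using k2 lam_pos best_unique by unfold_locales auto
  have istar: "istar k B p y < k" using istar_unique by (rule istar_less)
  have "optimal k B (objACC k B p y lam) al
      \<longleftrightarrow> optimal k B (weighted_min_rate k B y lam (WACC k B p y)) al"
    using objACC_eq_weighted_min_rate[OF istar] by (intro optimal_cong) (auto simp: feasible_def)
  moreover have "optimal k B (objFN k B p y lam) al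
      \<longleftrightarrow> optimal k B (weighted_min_rate k B y lam (WFN k B p y)) al"
    using objFN_eq_weighted_min_rate[OF istar] by (intro optimal_cong) simp
  moreover have "0 < WACC k B p y i b" "0 < WFN k B p y i b" for i b
    using WACC_ge_1 WFN_ge_1 by (simp_all add: less_le_trans[OF zero_less_one])
  ultimately show ?thesis
    unfolding Xi_Un_Xiadv[OF istar] using optimal_weighted_min_rate_iff[OF _ feas] by simp
qed

end
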